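(* Let $K$ be a Markov kernel from $(\mathbb{R}^d,\mathcal{B}(\mathbb{R}^d))$ to $(\mathbb{R}^{2d},\mathcal{B}(\mathbb{R}^{2d}))$, let $\alpha:\mathbb{R}^d\times\mathbb{R}^{2d}\to[0,1]$ be Borel measurable, and let $P$ be the Markov kernel on $\mathbb{R}^d$ given by $$P(q,A)=\int 1_A(\mathrm{proj}(z))\alpha(q,z)K(q,dz)+\delta_q(A)\int\{1-\alpha(q,z)\}K(q,dz).$$ Let $V:\mathbb{R}^d\to[1,\infty)$ be measurable, extended to $\mathbb{R}^{2d}$ by $V(q,p)=V(q)$, and for $q\in\mathbb{R}^d$ let $\mathscr R(q)=\{z\in\mathbb{R}^{2d}:\alpha(q,z)<1\}$ and $\mathscr B(q)=\{z\in\mathbb{R}^{2d}:V(\mathrm{proj}(z))\le V(q)\}$. Assume there exist $\lambda\in[0,1)$ and $b\ge0$ such that $KV\le\lambda V+b$ and $$\lim_{M\to\infty}\sup_{\{q:V(q)\ge M\}}K(q,\mathscr R(q)\cap\mathscr B(q))=0.$$ Then there exist $\tilde\lambda\in[0,1)$ and $\tilde b\ge0$ such that $PV\le\tilde\lambda V+\tilde b$.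
   Context: $\mathrm{proj}:\mathbb{R}^d\times\mathbb{R}^d\to\mathbb{R}^d$ is the projection onto the first $d$ coordinates. $KV(q)=\int V(z)K(q,dz)$. *)

theory Defs
  imports "HOL-Probability.Probability"
begin

definition mh_kernel ::
  "('a::euclidean_space \<Rightarrow> ('a \<times> 'a) measure) \<Rightarrow> ('a \<Rightarrow> 'a \<times> 'a \<Rightarrow> real) \<Rightarrow> 'a \<Rightarrow> 'a measure"
  where
  "mh_kernel K \<alpha> q = measure_of UNIV (sets borel)
     (\<lambda>A. (\<integral>\<^sup>+ z. indicator A (fst z) * ennreal (\<alpha> q z) \<partial>K q)
          + indicator A q * (\<integral>\<^sup>+ z. ennreal (1 - \<alpha> q z) \<partial>K q))"

end

theory Submission imports Defs begin

text \<open>If the proposal z lands in the set where a move may be rejected and does not increase V,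
  we pay at most V q extra; elsewhere either the move is always accepted or V increases, and
  in both cases the convex combination of V (fst z) and V q is at most V (fst z). The limit
  hypothesis makes the extra cost a small multiple of V q when V q is large, while for small
  V q it is absorbed into the constant.\<close>

definition mh_mixture :: "('a::euclidean_space \<times> 'a) measure \<Rightarrow> ('a \<times> 'a \<Rightarrow> real) \<Rightarrow> 'a \<Rightarrow> 'a measure"
  where "mh_mixture M a q =
    distr (density (M \<Otimes>\<^sub>M count_space UNIV) (\<lambda>(z, c). if c then ennreal (a z) else ennreal (1 - a z)))
      borel (\<lambda>(z, c). if c then fst z else q)"
  \<comment> \<open>The flag c records acceptance (probability a z, move to fst z) or rejection (stay at q).\<close>

lemma sets_mh_mixture [simp]: "sets (mh_mixture M a q) = sets borel"
  by (simp add: mh_mixture_def)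

lemma sets_mh_kernel [simp]: "sets (mh_kernel K \<alpha> q) = sets borel"
  by (simp add: mh_kernel_def sets_measure_of sets.sigma_sets_eq[of borel, simplified])

lemma nn_integral_mh_mixture:
  fixes M :: "('a::euclidean_space \<times> 'a) measure"
  assumes sets_M: "sets M = sets borel"
    and a_meas: "a \<in> borel_measurable borel"
    and h_meas [measurable]: "h \<in> borel_measurable borel"
  shows "(\<integral>\<^sup>+ y. h y \<partial>mh_mixture M a q)
       = (\<integral>\<^sup>+ z. ennreal (a z) * h (fst z) + ennreal (1 - a z) * h q \<partial>M)"
proof -
  have [measurable]: "a \<in> borel_measurable M"
    using a_meas measurable_cong_sets[OF sets_M refl] by blast
  have [measurable]: "fst \<in> M \<rightarrow>\<^sub>M borel"
    by (subst measurable_cong_sets[OF sets_M refl]) (simp_all add: borel_prod[symmetric])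
  let ?g = "\<lambda>(z, c). if c then ennreal (a z) else ennreal (1 - a z)"
  let ?f = "\<lambda>(z, c). if c then fst z else q"
  have "(\<integral>\<^sup>+ y. h y \<partial>mh_mixture M a q) = (\<integral>\<^sup>+ x. ?g x * h (?f x) \<partial>(M \<Otimes>\<^sub>M count_space UNIV))"
    by (simp add: mh_mixture_def nn_integral_distr nn_integral_density)
  also have "\<dots> = (\<integral>\<^sup>+ z. \<integral>\<^sup>+ c. ?g (z, c) * h (?f (z, c)) \<partial>count_space UNIV \<partial>M)"
    by (rule sigma_finite_measure.nn_integral_fst[symmetric])
       (auto intro: sigma_finite_measure_count_space_finite)
  also have "\<dots> = (\<integral>\<^sup>+ z. ennreal (a z) * h (fst z) + ennreal (1 - a z) * h q \<partial>M)"
    by (rule nn_integral_cong) (simp add: nn_integral_count_space_finite UNIV_bool add.commute)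
  finally show ?thesis .
qed

text \<open>Only an inequality: measure_of yields the given set function only if it is
  countably additive, and the zero measure otherwise.\<close>

lemma mh_kernel_le_mh_mixture:
  assumes sets_K: "sets (K q) = sets borel"
    and \<alpha>_meas: "\<alpha> q \<in> borel_measurable borel"
  shows "mh_kernel K \<alpha> q \<le> mh_mixture (K q) (\<alpha> q) q"
proof (subst le_measure, simp, intro ballI)
  have [measurable]: "\<alpha> q \<in> borel_measurable (K q)"
    using \<alpha>_meas measurable_cong_sets[OF sets_K refl] by blast
  have [measurable]: "fst \<in> K q \<rightarrow>\<^sub>M borel"
    by (subst measurable_cong_sets[OF sets_K refl]) (simp_all add: borel_prod[symmetric])
  fix A assume "A \<in> sets (mh_kernel K \<alpha> q)"
  then have [measurable]: "A \<in> sets borel" by simp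
  have "emeasure (mh_mixture (K q) (\<alpha> q) q) A = (\<integral>\<^sup>+ y. indicator A y \<partial>mh_mixture (K q) (\<alpha> q) q)"
    by (simp add: nn_integral_indicator)
  also have "\<dots> = (\<integral>\<^sup>+ z. ennreal (\<alpha> q z) * indicator A (fst z) + ennreal (1 - \<alpha> q z) * indicator A q \<partial>K q)"
    by (rule nn_integral_mh_mixture[OF sets_K \<alpha>_meas]) measurable
  also have "\<dots> = (\<integral>\<^sup>+ z. indicator A (fst z) * ennreal (\<alpha> q z) \<partial>K q)
      + indicator A q * (\<integral>\<^sup>+ z. ennreal (1 - \<alpha> q z) \<partial>K q)"
    by (subst nn_integral_add) (auto simp: nn_integral_cmult mult.commute)
  finally show "emeasure (mh_kernel K \<alpha> q) A \<le> emeasure (mh_mixture (K q) (\<alpha> q) q) A"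
    unfolding mh_kernel_def emeasure_measure_of_conv by auto
qed

lemma nn_integral_mh_kernel_le:
  assumes sets_K: "sets (K q) = sets borel"
    and \<alpha>_meas: "\<alpha> q \<in> borel_measurable borel"
    and h_meas: "h \<in> borel_measurable borel"
  shows "(\<integral>\<^sup>+ y. h y \<partial>mh_kernel K \<alpha> q)
     \<le> (\<integral>\<^sup>+ z. ennreal (\<alpha> q z) * h (fst z) + ennreal (1 - \<alpha> q z) * h q \<partial>K q)"
  using nn_integral_mono_measure[OF _ mh_kernel_le_mh_mixture[where K=K and \<alpha>=\<alpha>, OF sets_K \<alpha>_meas], of h]
    nn_integral_mh_mixture[OF sets_K \<alpha>_meas h_meas]
  by simp

lemma convex_combination_le_rejection_cost:
  fixes a v w :: real
  assumes "0 \<le> a" "a \<le> 1" "0 \<le> v"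
  shows "a * v + (1 - a) * w \<le> v + (if a < 1 \<and> v \<le> w then w else 0)"
proof (cases "a < 1 \<and> v \<le> w")
  case True
  then have "a * v \<le> a * w" using assms by (simp add: mult_left_mono)
  then show ?thesis using True assms by (simp add: algebra_simps)
next
  case False
  then have "a = 1 \<or> w < v" using assms by auto
  then show ?thesis
  proof
    assume "w < v"
    then have "(1 - a) * w \<le> (1 - a) * v" using assms by (simp add: mult_left_mono)
    then show ?thesis using False by (simp add: algebra_simps del: de_Morgan_conj)
  qed (use False in simp)
qed

lemma nn_integral_mh_kernel_le_rejection:
  fixes K :: "'a::euclidean_space \<Rightarrow> ('a \<times> 'a) measure"
  assumes sets_K: "sets (K q) = sets borel"
    and \<alpha>_meas [measurable]: "\<alpha> q \<in> borel_measurable borel"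
    and \<alpha>_range: "\<And>z. 0 \<le> \<alpha> q z \<and> \<alpha> q z \<le> 1"
    and V_meas [measurable]: "V \<in> borel_measurable borel"
    and V_nonneg: "\<And>x. 0 \<le> V x"
  shows "(\<integral>\<^sup>+ y. ennreal (V y) \<partial>mh_kernel K \<alpha> q)
     \<le> (\<integral>\<^sup>+ z. ennreal (V (fst z)) \<partial>K q)
        + ennreal (V q) * emeasure (K q) ({z. \<alpha> q z < 1} \<inter> {z. V (fst z) \<le> V q})"
proof -
  define R where "R = {z. \<alpha> q z < 1} \<inter> {z. V (fst z) \<le> V q}"
  have [measurable]: "fst \<in> (borel :: ('a \<times> 'a) measure) \<rightarrow>\<^sub>M borel"
    by (simp add: borel_prod[symmetric])
  have R_sets: "R \<in> sets (K q)"
    unfolding sets_K R_def by measurable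
  have V_fst_meas: "(\<lambda>z. ennreal (V (fst z))) \<in> borel_measurable (K q)"
    unfolding measurable_cong_sets[OF sets_K refl] by measurable
  have pointwise: "ennreal (\<alpha> q z) * ennreal (V (fst z)) + ennreal (1 - \<alpha> q z) * ennreal (V q)
      \<le> ennreal (V (fst z)) + ennreal (V q) * indicator R z" for z
  proof -
    have "\<alpha> q z * V (fst z) + (1 - \<alpha> q z) * V q
        \<le> V (fst z) + (if \<alpha> q z < 1 \<and> V (fst z) \<le> V q then V q else 0)"
      using convex_combination_le_rejection_cost \<alpha>_range V_nonneg by blast
    moreover have "V q * indicator R z = (if \<alpha> q z < 1 \<and> V (fst z) \<le> V q then V q else 0)"
      by (simp add: R_def)
    ultimately have real_le: "\<alpha> q z * V (fst z) + (1 - \<alpha> q z) * V q \<le> V (fst z) + V q * indicator R z"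
      by (simp only:)
    have "ennreal (\<alpha> q z) * ennreal (V (fst z)) + ennreal (1 - \<alpha> q z) * ennreal (V q)
        = ennreal (\<alpha> q z * V (fst z) + (1 - \<alpha> q z) * V q)"
      using \<alpha>_range[of z] V_nonneg by (simp add: ennreal_plus ennreal_mult)
    also have "\<dots> \<le> ennreal (V (fst z) + V q * indicator R z)"
      using real_le by (rule ennreal_leI)
    also have "\<dots> = ennreal (V (fst z)) + ennreal (V q) * indicator R z"
      using V_nonneg by (cases "z \<in> R") (simp_all add: ennreal_plus)
    finally show ?thesis .
  qed
  have "(\<integral>\<^sup>+ y. ennreal (V y) \<partial>mh_kernel K \<alpha> q)
     \<le> (\<integral>\<^sup>+ z. ennreal (\<alpha> q z) * ennreal (V (fst z)) + ennreal (1 - \<alpha> q z) * ennreal (V q) \<partial>K q)"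
    by (rule nn_integral_mh_kernel_le[where K=K and \<alpha>=\<alpha>, OF sets_K \<alpha>_meas]) measurable
  also have "\<dots> \<le> (\<integral>\<^sup>+ z. ennreal (V (fst z)) + ennreal (V q) * indicator R z \<partial>K q)"
    by (rule nn_integral_mono) (rule pointwise)
  also have "\<dots> = (\<integral>\<^sup>+ z. ennreal (V (fst z)) \<partial>K q) + ennreal (V q) * emeasure (K q) R"
    using R_sets V_fst_meas by (simp add: nn_integral_add nn_integral_cmult_indicator)
  finally show ?thesis unfolding R_def .
qed

lemma drift_condition_perturbed:
  fixes f r :: "'a \<Rightarrow> ennreal" and V :: "'a \<Rightarrow> real"
  assumes f_le: "\<And>q. f q \<le> ennreal (lam * V q + b) + ennreal (V q) * r q"
    and r_le_1: "\<And>q. r q \<le> 1"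
    and r_lim: "((\<lambda>M. SUP q\<in>{q. V q \<ge> M}. r q) \<longlongrightarrow> 0) at_top"
    and V_nonneg: "\<And>q. 0 \<le> V q"
    and lam_range: "0 \<le> lam" "lam < 1"
    and b_nonneg: "0 \<le> b"
  shows "\<exists>lam' b'. 0 \<le> lam' \<and> lam' < 1 \<and> 0 \<le> b' \<and> (\<forall>q. f q \<le> ennreal (lam' * V q + b'))"
proof -
  define \<epsilon> where "\<epsilon> = (1 - lam) / 2"
  have \<epsilon>_pos: "\<epsilon> > 0" using lam_range by (simp add: \<epsilon>_def)
  obtain M where M: "\<And>M'. M' \<ge> M \<Longrightarrow> (SUP q\<in>{q. V q \<ge> M'}. r q) < ennreal \<epsilon>"
    using order_tendstoD(2)[OF r_lim, of "ennreal \<epsilon>"] \<epsilon>_pos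
    by (auto simp: eventually_at_top_linorder)
  have "f q \<le> ennreal ((lam + \<epsilon>) * V q + (b + \<bar>M\<bar>))" for q
  proof -
    have "ennreal (V q) * r q \<le> ennreal (\<epsilon> * V q + \<bar>M\<bar>)"
    proof (cases "V q \<ge> M")
      case True
      have "r q \<le> (SUP q\<in>{q. V q \<ge> M}. r q)" using True by (intro SUP_upper) auto
      also have "\<dots> \<le> ennreal \<epsilon>" using M[of M] by simp
      finally have "ennreal (V q) * r q \<le> ennreal (V q) * ennreal \<epsilon>" by (rule mult_left_mono) simp
      also have "\<dots> = ennreal (\<epsilon> * V q)"
        using V_nonneg[of q] \<epsilon>_pos by (simp add: ennreal_mult mult.commute)
      also have "\<dots> \<le> ennreal (\<epsilon> * V q + \<bar>M\<bar>)"
        by (rule ennreal_leI) simp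
      finally show ?thesis .
    next
      case False
      have "ennreal (V q) * r q \<le> ennreal (V q)"
        using mult_left_mono[OF r_le_1[of q], of "ennreal (V q)"] by simp
      also have "\<dots> \<le> ennreal (\<epsilon> * V q + \<bar>M\<bar>)"
        using False V_nonneg[of q] \<epsilon>_pos by (intro ennreal_leI) (simp add: add_increasing)
      finally show ?thesis .
    qed
    then have "f q \<le> ennreal (lam * V q + b) + ennreal (\<epsilon> * V q + \<bar>M\<bar>)"
      by (rule order_trans[OF f_le[of q] add_left_mono])
    also have "\<dots> = ennreal ((lam + \<epsilon>) * V q + (b + \<bar>M\<bar>))"
      using V_nonneg[of q] lam_range b_nonneg \<epsilon>_pos
      by (subst ennreal_plus[symmetric]) (simp_all add: algebra_simps)
    finally show ?thesis .
  qed
  moreover have "0 \<le> lam + \<epsilon>" "lam + \<epsilon> < 1" "0 \<le> b + \<bar>M\<bar>"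
    using lam_range b_nonneg \<epsilon>_pos by (auto simp: \<epsilon>_def field_simps)
  ultimately show ?thesis by blast
qed

theorem proposition5:
  fixes K :: "'a::euclidean_space \<Rightarrow> ('a \<times> 'a) measure"
    and \<alpha> :: "'a \<Rightarrow> 'a \<times> 'a \<Rightarrow> real"
    and V :: "'a \<Rightarrow> real"
    and lam b :: real
  assumes K_kernel: "K \<in> borel \<rightarrow>\<^sub>M prob_algebra borel"
    and \<alpha>_meas: "(\<lambda>(q, z). \<alpha> q z) \<in> borel_measurable borel"
    and \<alpha>_range: "\<And>q z. 0 \<le> \<alpha> q z \<and> \<alpha> q z \<le> 1"
    and V_meas: "V \<in> borel_measurable borel"
    and V_ge1: "\<And>q. V q \<ge> 1"
    and lam_range: "0 \<le> lam" "lam < 1"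
    and b_nonneg: "0 \<le> b"
    and drift_K: "\<And>q. (\<integral>\<^sup>+ z. ennreal (V (fst z)) \<partial>K q) \<le> ennreal (lam * V q + b)"
    and lim_RB: "((\<lambda>M. SUP q\<in>{q. V q \<ge> M}.
                     emeasure (K q) ({z. \<alpha> q z < 1} \<inter> {z. V (fst z) \<le> V q}))
                  \<longlongrightarrow> 0) at_top"
  shows "\<exists>lam' b'. 0 \<le> lam' \<and> lam' < 1 \<and> 0 \<le> b' \<and>
           (\<forall>q. (\<integral>\<^sup>+ y. ennreal (V y) \<partial>mh_kernel K \<alpha> q) \<le> ennreal (lam' * V q + b'))"
proof -
  have V_nonneg: "0 \<le> V q" for q
    using V_ge1[of q] by linarith
  have "(\<integral>\<^sup>+ y. ennreal (V y) \<partial>mh_kernel K \<alpha> q)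
     \<le> ennreal (lam * V q + b) + ennreal (V q) * emeasure (K q) ({z. \<alpha> q z < 1} \<inter> {z. V (fst z) \<le> V q})"
    and "emeasure (K q) ({z. \<alpha> q z < 1} \<inter> {z. V (fst z) \<le> V q}) \<le> 1" for q
  proof -
    have K_q: "sets (K q) = sets borel" "prob_space (K q)"
      using measurable_space[OF K_kernel, of q] by (simp_all add: space_prob_algebra)
    have "(\<lambda>z. (q, z)) \<in> (borel :: ('a \<times> 'a) measure) \<rightarrow>\<^sub>M borel"
      by (simp add: borel_prod[symmetric])
    from measurable_compose[OF this \<alpha>_meas] have "\<alpha> q \<in> borel_measurable borel"
      by simp
    from nn_integral_mh_kernel_le_rejection[where K=K and \<alpha>=\<alpha>, OF K_q(1) this \<alpha>_range V_meas V_nonneg]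
    show "(\<integral>\<^sup>+ y. ennreal (V y) \<partial>mh_kernel K \<alpha> q)
      \<le> ennreal (lam * V q + b) + ennreal (V q) * emeasure (K q) ({z. \<alpha> q z < 1} \<inter> {z. V (fst z) \<le> V q})"
      by (rule order_trans) (rule add_right_mono[OF drift_K])
    show "emeasure (K q) ({z. \<alpha> q z < 1} \<inter> {z. V (fst z) \<le> V q}) \<le> 1"
      using K_q(2) by (rule prob_space.emeasure_le_1)
  qed
  then show ?thesis
    by (rule drift_condition_perturbed[OF _ _ lim_RB V_nonneg lam_range b_nonneg])
qed

end
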